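(* Let $g$ be a nondegenerate symmetric bilinear form on $\mathbb{R}^n$, $P\subset\mathbb{R}^n$ a subspace, $R:[0,1]\to\mathcal L(\mathbb{R}^n)$ continuous, and $Y:[0,1]\to\mathbb{R}^n$ a solution of $Y''=RY$ with $g(Y,Y)<0$ on $[0,1]$. Then the map $[0,1]\ni t\mapsto F_t\in\mathcal L(\mathcal H,\widetilde{\mathcal H})$ is of class $C^1$.
   Context: $\mathcal H=\{\hat V\in H^1([0,1],\mathbb{R}^n):\hat V(0)\in P,\hat V(1)=0\}$ with the $H^1$ norm; $\widetilde{\mathcal H}=L^2([0,1],\mathbb{R})/\mathfrak C$ with $\mathfrak C$ the constant functions; $\mathcal L(\mathcal H,\widetilde{\mathcal H})$ carries the operator norm. $F_t(\hat V)(u)=g(\hat V'(u),Y(tu))-t\,g(\hat V(u),Y'(tu))+\mathfrak C$. *)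

theory Defs
  imports "HOL-Analysis.Analysis"
begin

(* Elements of H^1([0,1],R^n) are represented by a pair (V, W): V is the function,
   W is a weak derivative of V, i.e. W is square integrable on [0,1] and
   V u = V 0 + int_0^u W for all u in [0,1] (V absolutely continuous with V' = W a.e.). *)
definition weak_deriv :: "(real \<Rightarrow> 'a::euclidean_space) \<Rightarrow> (real \<Rightarrow> 'a) \<Rightarrow> bool" where
  "weak_deriv V W \<longleftrightarrow>
     W measurable_on {0..1} \<and> (\<lambda>u. (norm (W u))\<^sup>2) integrable_on {0..1} \<and>
     (\<forall>u\<in>{0..1}. V u = V 0 + integral {0..u} W)"

definition inH :: "'a::euclidean_space set \<Rightarrow> (real \<Rightarrow> 'a) \<Rightarrow> (real \<Rightarrow> 'a) \<Rightarrow> bool" where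
  "inH P V W \<longleftrightarrow> weak_deriv V W \<and> V 0 \<in> P \<and> V 1 = 0"

definition h1norm :: "(real \<Rightarrow> 'a::euclidean_space) \<Rightarrow> (real \<Rightarrow> 'a) \<Rightarrow> real" where
  "h1norm V W = sqrt (integral {0..1} (\<lambda>u. (norm (V u))\<^sup>2) + integral {0..1} (\<lambda>u. (norm (W u))\<^sup>2))"

definition sq_int :: "(real \<Rightarrow> real) \<Rightarrow> bool" where
  "sq_int f \<longleftrightarrow> f measurable_on {0..1} \<and> (\<lambda>u. (f u)\<^sup>2) integrable_on {0..1}"

definition qnorm :: "(real \<Rightarrow> real) \<Rightarrow> real" where
  "qnorm f = (INF c::real. sqrt (integral {0..1} (\<lambda>u. (f u - c)\<^sup>2)))"

(* A map A from H (given on representatives (V,W)) to functions [0,1] -> R, read modulo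
   constants, is an element of L(H, L^2/C): values in L^2, linear modulo constants, bounded. *)
definition is_op :: "'a::euclidean_space set \<Rightarrow> ((real \<Rightarrow> 'a) \<Rightarrow> (real \<Rightarrow> 'a) \<Rightarrow> real \<Rightarrow> real) \<Rightarrow> bool" where
  "is_op P A \<longleftrightarrow>
     (\<forall>V W. inH P V W \<longrightarrow> sq_int (A V W)) \<and>
     (\<forall>V1 W1 V2 W2. inH P V1 W1 \<longrightarrow> inH P V2 W2 \<longrightarrow>
        qnorm (\<lambda>u. A (\<lambda>x. V1 x + V2 x) (\<lambda>x. W1 x + W2 x) u - A V1 W1 u - A V2 W2 u) = 0) \<and>
     (\<forall>V W c. inH P V W \<longrightarrow>
        qnorm (\<lambda>u. A (\<lambda>x. c *\<^sub>R V x) (\<lambda>x. c *\<^sub>R W x) u - c * A V W u) = 0) \<and>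
     (\<exists>C. \<forall>V W. inH P V W \<longrightarrow> qnorm (A V W) \<le> C * h1norm V W)"

definition op_norm :: "'a::euclidean_space set \<Rightarrow> ((real \<Rightarrow> 'a) \<Rightarrow> (real \<Rightarrow> 'a) \<Rightarrow> real \<Rightarrow> real) \<Rightarrow> real" where
  "op_norm P A = Inf {C. 0 \<le> C \<and> (\<forall>V W. inH P V W \<longrightarrow> qnorm (A V W) \<le> C * h1norm V W)}"

definition Fop :: "('a::euclidean_space \<Rightarrow> 'a \<Rightarrow> real) \<Rightarrow> (real \<Rightarrow> 'a) \<Rightarrow> (real \<Rightarrow> 'a) \<Rightarrow> real
                   \<Rightarrow> (real \<Rightarrow> 'a) \<Rightarrow> (real \<Rightarrow> 'a) \<Rightarrow> real \<Rightarrow> real" where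
  "Fop g Y Y' t V W u = g (W u) (Y (t * u)) - t * g (V u) (Y' (t * u))"

definition C1_op :: "'a::euclidean_space set \<Rightarrow> (real \<Rightarrow> (real \<Rightarrow> 'a) \<Rightarrow> (real \<Rightarrow> 'a) \<Rightarrow> real \<Rightarrow> real) \<Rightarrow> bool" where
  "C1_op P A \<longleftrightarrow>
     (\<forall>t\<in>{0..1}. is_op P (A t)) \<and>
     (\<exists>D. (\<forall>t\<in>{0..1}. is_op P (D t)) \<and>
          (\<forall>t\<in>{0..1}. ((\<lambda>h. op_norm P (\<lambda>V W u. (A (t + h) V W u - A t V W u) / h - D t V W u))
                          \<longlongrightarrow> 0) (at 0 within {h. t + h \<in> {0..1}})) \<and>
          (\<forall>t\<in>{0..1}. ((\<lambda>s. op_norm P (\<lambda>V W u. D s V W u - D t V W u))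
                          \<longlongrightarrow> 0) (at t within {0..1})))"

end

theory Submission
  imports Defs
begin

(* F_t acts as (V, V') |-> g(V, alpha_t) + g(V', beta_t) with continuous coefficients
   alpha_t u = -t Y'(tu) and beta_t u = Y(tu), and the operator norm of such a map is at most
   K (sup |alpha| + sup |beta|) for a bound K of g. So t |-> F_t is C^1 once t |-> (alpha_t, beta_t)
   is C^1 for the sup norm over u in [0,1]. This holds because Y is C^2 on the compact interval
   (Y'' = R Y is continuous): uniform continuity of Y' and Y'' makes the difference quotients in t
   converge uniformly in u. *)

lemma integral_power2_nonneg: "0 \<le> integral S (\<lambda>u. (f u :: real)\<^sup>2)"
  by (cases "(\<lambda>u. (f u)\<^sup>2) integrable_on S")
    (auto intro: integral_nonneg simp: not_integrable_integral)

lemma qnorm_nonneg: "0 \<le> qnorm f"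
  unfolding qnorm_def by (rule cINF_greatest) (auto intro: integral_power2_nonneg)

lemma qnorm_le_L2_norm: "qnorm f \<le> sqrt (integral {0..1} (\<lambda>u. (f u)\<^sup>2))"
proof -
  have "qnorm f \<le> sqrt (integral {0..1} (\<lambda>u. (f u - 0)\<^sup>2))"
    unfolding qnorm_def
    by (rule cINF_lower) (auto intro!: bdd_belowI[where m=0] integral_power2_nonneg)
  then show ?thesis by simp
qed

lemma qnorm_zero [simp]: "qnorm (\<lambda>u. 0) = 0"
  using qnorm_le_L2_norm[of "\<lambda>u. 0"] qnorm_nonneg[of "\<lambda>u. 0"] by simp

lemma h1norm_power2:
  "(h1norm V W)\<^sup>2 = integral {0..1} (\<lambda>u. (norm (V u))\<^sup>2) + integral {0..1} (\<lambda>u. (norm (W u))\<^sup>2)"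
  using integral_power2_nonneg[of "{0..1}" "\<lambda>u. norm (V u)"]
    integral_power2_nonneg[of "{0..1}" "\<lambda>u. norm (W u)"]
  by (simp add: h1norm_def)

lemma h1norm_nonneg: "0 \<le> h1norm V W"
  using integral_power2_nonneg[of "{0..1}" "\<lambda>u. norm (V u)"]
    integral_power2_nonneg[of "{0..1}" "\<lambda>u. norm (W u)"]
  by (simp add: h1norm_def)

lemma weak_derivD:
  assumes "weak_deriv V W"
  shows "W measurable_on {0..1}" "(\<lambda>u. (norm (W u))\<^sup>2) integrable_on {0..1}"
    and "continuous_on {0..1} V" "(\<lambda>u. (norm (V u))\<^sup>2) integrable_on {0..1}"
proof -
  show W_meas: "W measurable_on {0..1}" and W_sq: "(\<lambda>u. (norm (W u))\<^sup>2) integrable_on {0..1}"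
    using assms unfolding weak_deriv_def by blast+
  have V_eq: "\<forall>u\<in>{0..1}. V u = V 0 + integral {0..u} W"
    using assms unfolding weak_deriv_def by blast
  have "W integrable_on {0..1}"
  proof (rule measurable_bounded_by_integrable_imp_integrable)
    show "W \<in> borel_measurable (lebesgue_on {0..1})"
      using W_meas by (simp add: measurable_on_iff_borel_measurable)
    show "(\<lambda>u. 1 + (norm (W u))\<^sup>2) integrable_on {0..1}"
      using integrable_add[OF integrable_const_ivl W_sq] by simp
    show "norm (W u) \<le> 1 + (norm (W u))\<^sup>2" for u
      using zero_le_power2[of "norm (W u) - 1"] norm_ge_zero[of "W u"]
      by (simp add: power2_diff add.commute del: norm_ge_zero)
  qed simp
  then have "continuous_on {0..1} (\<lambda>u. V 0 + integral {0..u} W)"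
    by (intro continuous_on_add continuous_on_const indefinite_integral_continuous_1)
  then show V_cont: "continuous_on {0..1} V"
    by (rule continuous_on_eq) (use V_eq in metis)
  show "(\<lambda>u. (norm (V u))\<^sup>2) integrable_on {0..1}"
    by (intro integrable_continuous_interval continuous_intros V_cont)
qed

lemma continuous_on_imp_measurable_on_Icc:
  fixes f :: "real \<Rightarrow> 'b::euclidean_space"
  shows "continuous_on {a..b} f \<Longrightarrow> f measurable_on {a..b}"
  by (simp add: measurable_on_iff_borel_measurable continuous_imp_measurable_on_sets_lebesgue)

lemma power2_le_of_abs_le_weighted_sum:
  fixes x a b p q :: real
  assumes "0 \<le> a" "0 \<le> b" "0 \<le> p" "0 \<le> q" "\<bar>x\<bar> \<le> a * p + b * q"
  shows "x\<^sup>2 \<le> (a + b)\<^sup>2 * (p\<^sup>2 + q\<^sup>2)"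
proof -
  have "x\<^sup>2 \<le> (a * p + b * q)\<^sup>2"
    using assms by (metis abs_ge_zero power2_abs power_mono)
  also have "\<dots> \<le> (a + b)\<^sup>2 * (p\<^sup>2 + q\<^sup>2)"
  proof -
    have "(a + b)\<^sup>2 * (p\<^sup>2 + q\<^sup>2) - (a * p + b * q)\<^sup>2
        = a\<^sup>2 * q\<^sup>2 + b\<^sup>2 * p\<^sup>2 + a * b * (p - q)\<^sup>2 + a * b * (p\<^sup>2 + q\<^sup>2)"
      by (simp add: power2_eq_square algebra_simps)
    also have "\<dots> \<ge> 0"
      using assms by (intro add_nonneg_nonneg mult_nonneg_nonneg) auto
    finally show ?thesis by simp
  qed
  finally show ?thesis .
qed

lemma qnorm_le_h1norm:
  assumes "weak_deriv V W" "0 \<le> a" "0 \<le> b"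
    and f_bound: "\<And>u. u \<in> {0..1} \<Longrightarrow> \<bar>f u\<bar> \<le> a * norm (V u) + b * norm (W u)"
  shows "qnorm f \<le> (a + b) * h1norm V W"
proof -
  have V_sq: "(\<lambda>u. (norm (V u))\<^sup>2) integrable_on {0..1}"
    and W_sq: "(\<lambda>u. (norm (W u))\<^sup>2) integrable_on {0..1}"
    using weak_derivD[OF assms(1)] by auto
  define h1_sq where "h1_sq = (\<lambda>u. (norm (V u))\<^sup>2 + (norm (W u))\<^sup>2)"
  have h1_sq_int: "h1_sq integrable_on {0..1}"
    unfolding h1_sq_def using V_sq W_sq by (rule integrable_add)
  have "integral {0..1} (\<lambda>u. (f u)\<^sup>2) \<le> integral {0..1} (\<lambda>u. (a + b)\<^sup>2 * h1_sq u)"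
  proof (cases "(\<lambda>u. (f u)\<^sup>2) integrable_on {0..1}")
    case True
    show ?thesis
      using True integrable_cmul[OF h1_sq_int] f_bound assms(2,3)
      by (intro integral_le) (auto simp: h1_sq_def intro!: power2_le_of_abs_le_weighted_sum)
  next
    case False
    then show ?thesis
      using h1_sq_int by (simp add: not_integrable_integral h1_sq_def integral_nonneg)
  qed
  also have "\<dots> = ((a + b) * h1norm V W)\<^sup>2"
    using V_sq W_sq by (simp add: h1_sq_def h1norm_power2 integral_add power_mult_distrib)
  finally have "sqrt (integral {0..1} (\<lambda>u. (f u)\<^sup>2)) \<le> sqrt (((a + b) * h1norm V W)\<^sup>2)"
    by (rule real_sqrt_le_mono)
  also have "\<dots> = (a + b) * h1norm V W"
    using assms(2,3) h1norm_nonneg[of V W] by simp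
  finally show ?thesis
    using qnorm_le_L2_norm[of f] by linarith
qed

lemma op_norm_bounds:
  assumes "0 \<le> a" "0 \<le> b"
    and "\<And>V W u. inH P V W \<Longrightarrow> u \<in> {0..1} \<Longrightarrow> \<bar>A V W u\<bar> \<le> a * norm (V u) + b * norm (W u)"
  shows "0 \<le> op_norm P A" "op_norm P A \<le> a + b"
proof -
  have bound: "a + b \<in> {C. 0 \<le> C \<and> (\<forall>V W. inH P V W \<longrightarrow> qnorm (A V W) \<le> C * h1norm V W)}"
    using assms by (auto intro!: qnorm_le_h1norm simp: inH_def)
  show "0 \<le> op_norm P A"
    unfolding op_norm_def by (rule cInf_greatest) (use bound in auto)
  show "op_norm P A \<le> a + b"
    unfolding op_norm_def by (rule cInf_lower[OF bound]) (auto intro!: bdd_belowI[where m=0])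
qed

definition bilin_op :: "('a \<Rightarrow> 'a \<Rightarrow> real) \<Rightarrow> (real \<Rightarrow> 'a) \<Rightarrow> (real \<Rightarrow> 'a)
                        \<Rightarrow> (real \<Rightarrow> 'a) \<Rightarrow> (real \<Rightarrow> 'a) \<Rightarrow> real \<Rightarrow> real" where
  "bilin_op g \<alpha> \<beta> V W u = g (V u) (\<alpha> u) + g (W u) (\<beta> u)"

lemma abs_bilin_op_le:
  assumes g: "\<And>x y. norm (g x y) \<le> norm x * norm y * K" and "0 \<le> K"
    and "norm (\<alpha> u) \<le> a" "norm (\<beta> u) \<le> b"
  shows "\<bar>bilin_op g \<alpha> \<beta> V W u\<bar> \<le> K * a * norm (V u) + K * b * norm (W u)"
proof -
  have "\<bar>g (V u) (\<alpha> u)\<bar> \<le> K * a * norm (V u)"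
    using g[of "V u" "\<alpha> u"] assms(2,3) mult_left_mono[of "norm (\<alpha> u)" a "norm (V u) * K"]
    by (simp add: ac_simps)
  moreover have "\<bar>g (W u) (\<beta> u)\<bar> \<le> K * b * norm (W u)"
    using g[of "W u" "\<beta> u"] assms(2,4) mult_left_mono[of "norm (\<beta> u)" b "norm (W u) * K"]
    by (simp add: ac_simps)
  ultimately show ?thesis
    unfolding bilin_op_def by linarith
qed

lemma bilin_op_bound:
  fixes g :: "'a::euclidean_space \<Rightarrow> 'a \<Rightarrow> real"
  assumes "bilinear g" and "continuous_on {0..1} \<alpha>" "continuous_on {0..1} \<beta>"
  obtains C where "0 < C"
    "\<And>V W u. u \<in> {0..1} \<Longrightarrow> \<bar>bilin_op g \<alpha> \<beta> V W u\<bar> \<le> C * norm (V u) + C * norm (W u)"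
proof -
  interpret g: bounded_bilinear g
    using assms(1) bilinear_conv_bounded_bilinear by blast
  obtain K where "0 < K" and K: "\<And>x y. norm (g x y) \<le> norm x * norm y * K"
    using g.pos_bounded by blast
  have "compact (\<alpha> ` {0..1} \<union> \<beta> ` {0..1})"
    using assms(2,3) by (intro compact_Un compact_continuous_image compact_Icc)
  then obtain B where "0 < B" and "\<And>u. u \<in> {0..1} \<Longrightarrow> norm (\<alpha> u) \<le> B \<and> norm (\<beta> u) \<le> B"
    by (auto dest!: compact_imp_bounded simp: bounded_pos)
  with abs_bilin_op_le[OF K] \<open>0 < K\<close> that[of "K * B"] show ?thesis
    by simp
qed

lemma sq_int_bilin_op:
  fixes g :: "'a::euclidean_space \<Rightarrow> 'a \<Rightarrow> real"
  assumes "bilinear g" and \<alpha>_cont: "continuous_on {0..1} \<alpha>" and \<beta>_cont: "continuous_on {0..1} \<beta>"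
    and "weak_deriv V W"
  shows "sq_int (bilin_op g \<alpha> \<beta> V W)"
proof -
  obtain C where "0 < C"
    and bound: "\<And>u. u \<in> {0..1} \<Longrightarrow> \<bar>bilin_op g \<alpha> \<beta> V W u\<bar> \<le> C * norm (V u) + C * norm (W u)"
    using bilin_op_bound[OF assms(1-3)] by metis
  note VW = weak_derivD[OF assms(4)]
  have meas: "bilin_op g \<alpha> \<beta> V W measurable_on {0..1}"
    unfolding bilin_op_def
    by (intro measurable_on_add measurable_on_bilinear[OF assms(1)] VW(1)
        continuous_on_imp_measurable_on_Icc \<alpha>_cont \<beta>_cont VW(3))
  have "(\<lambda>u. (bilin_op g \<alpha> \<beta> V W u)\<^sup>2) integrable_on {0..1}"
  proof (rule measurable_bounded_by_integrable_imp_integrable)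
    show "(\<lambda>u. (bilin_op g \<alpha> \<beta> V W u)\<^sup>2) \<in> borel_measurable (lebesgue_on {0..1})"
      using measurable_on_scaleR[OF meas meas]
      by (simp add: measurable_on_iff_borel_measurable power2_eq_square)
    show "(\<lambda>u. (C + C)\<^sup>2 * ((norm (V u))\<^sup>2 + (norm (W u))\<^sup>2)) integrable_on {0..1}"
      using integrable_cmul[OF integrable_add[OF VW(4) VW(2)]] by simp
    show "norm ((bilin_op g \<alpha> \<beta> V W u)\<^sup>2) \<le> (C + C)\<^sup>2 * ((norm (V u))\<^sup>2 + (norm (W u))\<^sup>2)"
      if "u \<in> {0..1}" for u
      using power2_le_of_abs_le_weighted_sum[OF _ _ norm_ge_zero norm_ge_zero bound[OF that]]
        \<open>0 < C\<close>
      by simp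
  qed simp
  with meas show ?thesis
    unfolding sq_int_def by blast
qed

lemma is_op_bilin_op:
  fixes g :: "'a::euclidean_space \<Rightarrow> 'a \<Rightarrow> real"
  assumes "bilinear g" and "continuous_on {0..1} \<alpha>" "continuous_on {0..1} \<beta>"
  shows "is_op P (bilin_op g \<alpha> \<beta>)"
proof -
  obtain C where "0 < C"
    and bound: "\<And>V W u. u \<in> {0..1} \<Longrightarrow> \<bar>bilin_op g \<alpha> \<beta> V W u\<bar> \<le> C * norm (V u) + C * norm (W u)"
    using bilin_op_bound[OF assms] by metis
  have "qnorm (bilin_op g \<alpha> \<beta> V W) \<le> (C + C) * h1norm V W" if "weak_deriv V W" for V W
    using that bound \<open>0 < C\<close> by (intro qnorm_le_h1norm) auto
  moreover have "bilin_op g \<alpha> \<beta> (\<lambda>x. V\<^sub>1 x + V\<^sub>2 x) (\<lambda>x. W\<^sub>1 x + W\<^sub>2 x) u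
      - bilin_op g \<alpha> \<beta> V\<^sub>1 W\<^sub>1 u - bilin_op g \<alpha> \<beta> V\<^sub>2 W\<^sub>2 u = 0" for V\<^sub>1 W\<^sub>1 V\<^sub>2 W\<^sub>2 u
    using assms(1) by (simp add: bilin_op_def bilinear_ladd)
  moreover have "bilin_op g \<alpha> \<beta> (\<lambda>x. c *\<^sub>R V x) (\<lambda>x. c *\<^sub>R W x) u - c * bilin_op g \<alpha> \<beta> V W u = 0"
    for V W c u
    using assms(1) by (simp add: bilin_op_def bilinear_lmul algebra_simps)
  ultimately show ?thesis
    using sq_int_bilin_op[OF assms] unfolding is_op_def inH_def by simp blast
qed

lemma tendsto_op_norm_bilin_op:
  fixes g :: "'a::euclidean_space \<Rightarrow> 'a \<Rightarrow> real"
  assumes "bilinear g"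
    and \<alpha>: "uniform_limit {0..1} \<alpha> (\<lambda>_. 0) F" and \<beta>: "uniform_limit {0..1} \<beta> (\<lambda>_. 0) F"
  shows "((\<lambda>x. op_norm P (bilin_op g (\<alpha> x) (\<beta> x))) \<longlongrightarrow> 0) F"
proof (rule tendstoI)
  interpret g: bounded_bilinear g
    using assms(1) bilinear_conv_bounded_bilinear by blast
  obtain K where "0 < K" and K: "\<And>x y. norm (g x y) \<le> norm x * norm y * K"
    using g.pos_bounded by blast
  fix e :: real
  assume "0 < e"
  define \<epsilon> where "\<epsilon> = e / (4 * K)"
  have "0 < \<epsilon>"
    using \<open>0 < e\<close> \<open>0 < K\<close> by (simp add: \<epsilon>_def)
  from uniform_limitD[OF \<alpha> this] uniform_limitD[OF \<beta> this]
  show "\<forall>\<^sub>F x in F. dist (op_norm P (bilin_op g (\<alpha> x) (\<beta> x))) 0 < e"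
  proof eventually_elim
    case (elim x)
    have "\<bar>bilin_op g (\<alpha> x) (\<beta> x) V W u\<bar> \<le> K * \<epsilon> * norm (V u) + K * \<epsilon> * norm (W u)"
      if "u \<in> {0..1}" for V W u
      using elim that \<open>0 < K\<close> by (intro abs_bilin_op_le[OF K]) (auto simp: dist_norm less_imp_le)
    then have "0 \<le> op_norm P (bilin_op g (\<alpha> x) (\<beta> x))"
      and "op_norm P (bilin_op g (\<alpha> x) (\<beta> x)) \<le> K * \<epsilon> + K * \<epsilon>"
      using op_norm_bounds[where a="K * \<epsilon>" and b="K * \<epsilon>" and A="bilin_op g (\<alpha> x) (\<beta> x)"]
        \<open>0 < K\<close> \<open>0 < \<epsilon>\<close>
      by auto
    moreover have "K * \<epsilon> + K * \<epsilon> < e"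
      using \<open>0 < e\<close> \<open>0 < K\<close> by (simp add: \<epsilon>_def)
    ultimately show ?case
      by (simp add: dist_real_def)
  qed
qed

lemma uniform_limit_rescaled:
  fixes f :: "real \<Rightarrow> 'b::real_normed_vector"
  assumes "continuous_on {0..1} f"
    and \<tau>: "(\<tau> \<longlongrightarrow> t) F" "\<forall>\<^sub>F x in F. \<tau> x \<in> {0..1}" and "t \<in> {0..1}"
  shows "uniform_limit {0..1} (\<lambda>x u. f (\<tau> x * u)) (\<lambda>u. f (t * u)) F"
proof -
  have "uniform_limit {0..1} (\<lambda>x u. \<tau> x * u) (\<lambda>u. t * u) F"
  proof (rule uniform_limitI)
    fix e :: real
    assume "0 < e"
    from tendstoD[OF \<tau>(1) this]
    show "\<forall>\<^sub>F x in F. \<forall>u\<in>{0..1}. dist (\<tau> x * u) (t * u) < e"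
    proof eventually_elim
      case (elim x)
      have "dist (\<tau> x * u) (t * u) \<le> dist (\<tau> x) t" if "u \<in> {0..1}" for u
        using that mult_left_le[of u "dist (\<tau> x) t"]
        by (simp add: dist_real_def abs_mult left_diff_distrib[symmetric])
      with elim show ?case
        by (meson le_less_trans)
    qed
  qed
  moreover have "\<forall>\<^sub>F x in F. (\<lambda>u. \<tau> x * u) ` {0..1} \<subseteq> {0..1}"
    using \<tau>(2) by eventually_elim (auto intro: mult_le_one)
  ultimately have "uniform_limit {0..1} (\<lambda>x u. f (\<tau> x * u)) (f \<circ> (\<lambda>u. t * u)) F"
    using \<open>t \<in> {0..1}\<close>
    by (intro uniform_limit_compose[OF _ compact_uniformly_continuous[OF assms(1) compact_Icc]])
      (auto intro: mult_le_one)
  then show ?thesis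
    by (simp add: o_def)
qed

lemma uniform_linearization_Icc:
  fixes f f' :: "real \<Rightarrow> 'b::real_normed_vector"
  assumes deriv: "\<And>x. x \<in> {l..r} \<Longrightarrow> (f has_vector_derivative f' x) (at x within {l..r})"
    and "continuous_on {l..r} f'" and "0 < e"
  obtains \<delta> where "0 < \<delta>"
    "\<And>a b. a \<in> {l..r} \<Longrightarrow> b \<in> {l..r} \<Longrightarrow> \<bar>b - a\<bar> < \<delta>
       \<Longrightarrow> norm (f b - f a - (b - a) *\<^sub>R f' a) \<le> e * \<bar>b - a\<bar>"
proof -
  obtain \<delta> where "0 < \<delta>"
    and \<delta>: "\<And>x y. x \<in> {l..r} \<Longrightarrow> y \<in> {l..r} \<Longrightarrow> dist y x < \<delta> \<Longrightarrow> dist (f' y) (f' x) < e"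
    using compact_uniformly_continuous[OF assms(2) compact_Icc] \<open>0 < e\<close>
    unfolding uniformly_continuous_on_def by metis
  have "norm (f b - f a - (b - a) *\<^sub>R f' a) \<le> e * \<bar>b - a\<bar>"
    if a: "a \<in> {l..r}" and b: "b \<in> {l..r}" and "\<bar>b - a\<bar> < \<delta>" for a b
  proof -
    define S where "S = closed_segment a b"
    have "S \<subseteq> {l..r}"
      using a b by (simp add: S_def closed_segment_subset)
    have "norm (f b - f a - (b - a) *\<^sub>R f' a) \<le> norm (b - a) * e"
    proof (rule differentiable_bound_linearization[where f' = "\<lambda>x h. h *\<^sub>R f' x" and S = S])
      show "a + t *\<^sub>R (b - a) \<in> S" if "t \<in> {0..1}" for t
        using that by (auto simp: S_def in_segment algebra_simps intro!: exI[of _ t])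
      show "(f has_derivative (\<lambda>h. h *\<^sub>R f' x)) (at x within S)" if "x \<in> S" for x
      proof -
        have "x \<in> {l..r}"
          using that \<open>S \<subseteq> {l..r}\<close> by blast
        with deriv[of x] \<open>S \<subseteq> {l..r}\<close> show ?thesis
          unfolding has_vector_derivative_def by (blast intro: has_derivative_subset)
      qed
      show "onorm ((\<lambda>h. h *\<^sub>R f' x) - (\<lambda>h. h *\<^sub>R f' a)) \<le> e" if "x \<in> S" for x
      proof -
        have "(\<lambda>h. h *\<^sub>R f' x) - (\<lambda>h. h *\<^sub>R f' a) = (\<lambda>h. h *\<^sub>R (f' x - f' a))"
          by (auto simp: fun_diff_def scaleR_diff_right)
        moreover have "dist (f' x) (f' a) < e"
          using that \<open>S \<subseteq> {l..r}\<close> \<open>\<bar>b - a\<bar> < \<delta>\<close> a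
          by (intro \<delta>) (auto simp: S_def closed_segment_eq_real_ivl dist_real_def split: if_splits)
        ultimately show ?thesis
          by (simp add: onorm_scaleR_left[OF bounded_linear_ident] onorm_id dist_norm)
      qed
    qed (simp add: S_def)
    then show ?thesis
      by (simp add: mult.commute)
  qed
  with \<open>0 < \<delta>\<close> that show ?thesis
    by blast
qed

lemma uniform_limit_difference_quotient_rescaled:
  fixes f f' :: "real \<Rightarrow> 'b::real_normed_vector"
  assumes "\<And>x. x \<in> {0..1} \<Longrightarrow> (f has_vector_derivative f' x) (at x within {0..1})"
    and "continuous_on {0..1} f'" and t: "t \<in> {0..1}"
  shows "uniform_limit {0..1} (\<lambda>h u. (1 / h) *\<^sub>R (f ((t + h) * u) - f (t * u)))
           (\<lambda>u. u *\<^sub>R f' (t * u)) (at 0 within {h. t + h \<in> {0..1}})"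
proof (rule uniform_limitI)
  fix e :: real
  assume "0 < e"
  then obtain \<delta> where "0 < \<delta>"
    and \<delta>: "\<And>a b. a \<in> {0..1} \<Longrightarrow> b \<in> {0..1} \<Longrightarrow> \<bar>b - a\<bar> < \<delta>
              \<Longrightarrow> norm (f b - f a - (b - a) *\<^sub>R f' a) \<le> e / 2 * \<bar>b - a\<bar>"
    using uniform_linearization_Icc[OF assms(1,2), of "e / 2"] by auto
  have "dist ((1 / h) *\<^sub>R (f ((t + h) * u) - f (t * u))) (u *\<^sub>R f' (t * u)) < e"
    if h: "t + h \<in> {0..1}" "h \<noteq> 0" "\<bar>h\<bar> < \<delta>" and u: "u \<in> {0..1}" for h u
  proof -
    have step: "(t + h) * u - t * u = h * u"
      by (simp add: algebra_simps)
    have "\<bar>h * u\<bar> \<le> \<bar>h\<bar>"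
      using u by (simp add: abs_mult mult_left_le)
    have "dist ((1 / h) *\<^sub>R (f ((t + h) * u) - f (t * u))) (u *\<^sub>R f' (t * u))
        = norm (f ((t + h) * u) - f (t * u) - (h * u) *\<^sub>R f' (t * u)) / \<bar>h\<bar>"
    proof -
      have "(1 / h) *\<^sub>R (f ((t + h) * u) - f (t * u)) - u *\<^sub>R f' (t * u)
          = (1 / h) *\<^sub>R (f ((t + h) * u) - f (t * u) - (h * u) *\<^sub>R f' (t * u))"
        using \<open>h \<noteq> 0\<close> by (simp add: scaleR_diff_right)
      then show ?thesis
        by (simp add: dist_norm divide_inverse mult.commute)
    qed
    also have "\<dots> \<le> e / 2 * \<bar>h * u\<bar> / \<bar>h\<bar>"
      using \<delta>[of "t * u" "(t + h) * u"] \<open>\<bar>h * u\<bar> \<le> \<bar>h\<bar>\<close> t h u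
      by (intro divide_right_mono) (simp_all add: step mult_le_one)
    also have "\<dots> \<le> e / 2"
      using \<open>\<bar>h * u\<bar> \<le> \<bar>h\<bar>\<close> \<open>0 < e\<close> \<open>h \<noteq> 0\<close> by (simp add: divide_le_eq)
    finally have "dist ((1 / h) *\<^sub>R (f ((t + h) * u) - f (t * u))) (u *\<^sub>R f' (t * u)) \<le> e / 2" .
    with \<open>0 < e\<close> show ?thesis
      by simp
  qed
  with \<open>0 < \<delta>\<close> show "\<forall>\<^sub>F h in at 0 within {h. t + h \<in> {0..1}}. \<forall>u\<in>{0..1}.
      dist ((1 / h) *\<^sub>R (f ((t + h) * u) - f (t * u))) (u *\<^sub>R f' (t * u)) < e"
    unfolding eventually_at by (auto intro!: exI[of _ \<delta>])
qed

definition Fop_deriv :: "('a::real_vector \<Rightarrow> 'a \<Rightarrow> real) \<Rightarrow> (real \<Rightarrow> 'a) \<Rightarrow> (real \<Rightarrow> 'a) \<Rightarrow> real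
                         \<Rightarrow> (real \<Rightarrow> 'a) \<Rightarrow> (real \<Rightarrow> 'a) \<Rightarrow> real \<Rightarrow> real" where
  "Fop_deriv g Y' Y'' t =
     bilin_op g (\<lambda>u. - Y' (t * u) - (t * u) *\<^sub>R Y'' (t * u)) (\<lambda>u. u *\<^sub>R Y' (t * u))"

lemma Fop_eq_bilin_op:
  "bilinear g \<Longrightarrow> Fop g Y Y' t = bilin_op g (\<lambda>u. (- t) *\<^sub>R Y' (t * u)) (\<lambda>u. Y (t * u))"
  by (simp add: fun_eq_iff Fop_def bilin_op_def bilinear_rmul bilinear_rneg)

lemma bilin_op_diff:
  "bilinear g \<Longrightarrow> bilin_op g \<alpha> \<beta> V W u - bilin_op g \<alpha>' \<beta>' V W u
     = bilin_op g (\<lambda>u. \<alpha> u - \<alpha>' u) (\<lambda>u. \<beta> u - \<beta>' u) V W u"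
  by (simp add: bilin_op_def bilinear_rsub)

lemma bilin_op_difference_quotient:
  "bilinear g \<Longrightarrow>
     (bilin_op g \<alpha>\<^sub>1 \<beta>\<^sub>1 V W u - bilin_op g \<alpha>\<^sub>0 \<beta>\<^sub>0 V W u) / h - bilin_op g \<alpha> \<beta> V W u
     = bilin_op g (\<lambda>u. (1 / h) *\<^sub>R (\<alpha>\<^sub>1 u - \<alpha>\<^sub>0 u) - \<alpha> u)
         (\<lambda>u. (1 / h) *\<^sub>R (\<beta>\<^sub>1 u - \<beta>\<^sub>0 u) - \<beta> u) V W u"
  by (simp add: bilin_op_def bilinear_rsub bilinear_rmul diff_divide_distrib add_divide_distrib)

lemma Fop_difference_quotient_tendsto:
  fixes g :: "'a::euclidean_space \<Rightarrow> 'a \<Rightarrow> real"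
  assumes "bilinear g"
    and Y: "\<And>x. x \<in> {0..1} \<Longrightarrow> (Y has_vector_derivative Y' x) (at x within {0..1})"
    and Y': "\<And>x. x \<in> {0..1} \<Longrightarrow> (Y' has_vector_derivative Y'' x) (at x within {0..1})"
    and "continuous_on {0..1} Y''" and t: "t \<in> {0..1}"
  shows "((\<lambda>h. op_norm P (\<lambda>V W u. (Fop g Y Y' (t + h) V W u - Fop g Y Y' t V W u) / h
            - Fop_deriv g Y' Y'' t V W u)) \<longlongrightarrow> 0) (at 0 within {h. t + h \<in> {0..1}})"
proof -
  let ?F = "at 0 within {h. t + h \<in> {0..1}}"
  have Y'_cont: "continuous_on {0..1} Y'"
    unfolding continuous_on_eq_continuous_within using Y' has_vector_derivative_continuous by blast
  have "((\<lambda>h. t + h) \<longlongrightarrow> t) ?F"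
    by (auto intro!: tendsto_eq_intros)
  moreover have "\<forall>\<^sub>F h in ?F. t + h \<in> {0..1}"
    by (simp add: eventually_at_filter)
  ultimately have "uniform_limit {0..1} (\<lambda>h u. - (Y' ((t + h) * u) - Y' (t * u))
      - t *\<^sub>R ((1 / h) *\<^sub>R (Y' ((t + h) * u) - Y' (t * u)) - u *\<^sub>R Y'' (t * u)))
      (\<lambda>u. - (Y' (t * u) - Y' (t * u)) - t *\<^sub>R (u *\<^sub>R Y'' (t * u) - u *\<^sub>R Y'' (t * u))) ?F"
    by (intro uniform_limit_intros uniform_limit_rescaled[OF Y'_cont]
        uniform_limit_difference_quotient_rescaled[OF Y' assms(4) t] t)
  \<comment> \<open>product rule for the coefficient \<open>-t Y'(tu)\<close>, valid once \<open>h \<noteq> 0\<close>\<close>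
  then have \<alpha>: "uniform_limit {0..1}
      (\<lambda>h u. (1 / h) *\<^sub>R ((- (t + h)) *\<^sub>R Y' ((t + h) * u) - (- t) *\<^sub>R Y' (t * u))
        - (- Y' (t * u) - (t * u) *\<^sub>R Y'' (t * u))) (\<lambda>_. 0) ?F"
    by (rule uniform_limit_cong[THEN iffD1, rotated 2])
      (auto simp: eventually_at_filter algebra_simps divide_simps)
  have \<beta>: "uniform_limit {0..1}
      (\<lambda>h u. (1 / h) *\<^sub>R (Y ((t + h) * u) - Y (t * u)) - u *\<^sub>R Y' (t * u)) (\<lambda>_. 0) ?F"
    using uniform_limit_minus[OF uniform_limit_difference_quotient_rescaled[OF Y Y'_cont t]
        uniform_limit_const[where S="{0..1}" and c="\<lambda>u. u *\<^sub>R Y' (t * u)"]]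
    by simp
  from tendsto_op_norm_bilin_op[OF assms(1) \<alpha> \<beta>] show ?thesis
    by (simp add: Fop_eq_bilin_op[OF assms(1)] Fop_deriv_def
        bilin_op_difference_quotient[OF assms(1)])
qed

lemma Fop_deriv_continuous:
  fixes g :: "'a::euclidean_space \<Rightarrow> 'a \<Rightarrow> real"
  assumes "bilinear g"
    and Y'_cont: "continuous_on {0..1} Y'" and Y''_cont: "continuous_on {0..1} Y''" and t: "t \<in> {0..1}"
  shows "((\<lambda>s. op_norm P (\<lambda>V W u. Fop_deriv g Y' Y'' s V W u - Fop_deriv g Y' Y'' t V W u)) \<longlongrightarrow> 0)
           (at t within {0..1})"
proof -
  let ?F = "at t within {0..1}"
  have "continuous_on {0..1} (\<lambda>x. x *\<^sub>R Y'' x)"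
    by (intro continuous_intros Y''_cont)
  moreover have \<tau>: "((\<lambda>s. s) \<longlongrightarrow> t) ?F" "\<forall>\<^sub>F s in ?F. s \<in> {0..1}"
    by (simp_all add: eventually_at_filter)
  ultimately have Y''_lim: "uniform_limit {0..1}
      (\<lambda>s u. (s * u) *\<^sub>R Y'' (s * u)) (\<lambda>u. (t * u) *\<^sub>R Y'' (t * u)) ?F"
    using uniform_limit_rescaled[of "\<lambda>x. x *\<^sub>R Y'' x"] t by blast
  have Y'_lim: "uniform_limit {0..1} (\<lambda>s u. Y' (s * u)) (\<lambda>u. Y' (t * u)) ?F"
    using uniform_limit_rescaled[OF Y'_cont \<tau> t] .
  have \<alpha>: "uniform_limit {0..1} (\<lambda>s u. (- Y' (s * u) - (s * u) *\<^sub>R Y'' (s * u))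
      - (- Y' (t * u) - (t * u) *\<^sub>R Y'' (t * u))) (\<lambda>_. 0) ?F"
    using uniform_limit_minus[OF uniform_limit_minus[OF uniform_limit_uminus[OF Y'_lim] Y''_lim]
        uniform_limit_const[where c="\<lambda>u. - Y' (t * u) - (t * u) *\<^sub>R Y'' (t * u)"]]
    by simp
  have \<beta>: "uniform_limit {0..1} (\<lambda>s u. u *\<^sub>R Y' (s * u) - u *\<^sub>R Y' (t * u)) (\<lambda>_. 0) ?F"
  proof (rule uniform_limit_null_comparison)
    have "norm (u *\<^sub>R Y' (s * u) - u *\<^sub>R Y' (t * u)) \<le> norm (Y' (s * u) - Y' (t * u))"
      if "u \<in> {0..1}" for s u
      using that mult_left_le_one_le[of "norm (Y' (s * u) - Y' (t * u))" u]
      by (simp flip: scaleR_diff_right)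
    then show "\<forall>\<^sub>F s in ?F. \<forall>u\<in>{0..1}.
        norm (u *\<^sub>R Y' (s * u) - u *\<^sub>R Y' (t * u)) \<le> norm (Y' (s * u) - Y' (t * u))"
      by (intro always_eventually) blast
    have "uniform_limit {0..1} (\<lambda>s u. norm (Y' (s * u) - Y' (t * u)))
        (\<lambda>u. norm (Y' (t * u) - Y' (t * u))) ?F"
      by (intro uniform_limit_norm uniform_limit_minus Y'_lim uniform_limit_const)
    then show "uniform_limit {0..1} (\<lambda>s u. norm (Y' (s * u) - Y' (t * u))) (\<lambda>_. 0) ?F"
      by simp
  qed
  from tendsto_op_norm_bilin_op[OF assms(1) \<alpha> \<beta>] show ?thesis
    unfolding Fop_deriv_def bilin_op_diff[OF assms(1)] .
qed

theorem lemma4p3: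
  fixes g :: "'a::euclidean_space \<Rightarrow> 'a \<Rightarrow> real"
    and P :: "'a set"
    and R :: "real \<Rightarrow> 'a \<Rightarrow>\<^sub>L 'a"
    and Y Y' :: "real \<Rightarrow> 'a"
  assumes g_bilinear: "bilinear g"
    and g_sym: "\<And>x y. g x y = g y x"
    and g_nondeg: "\<And>x. (\<forall>y. g x y = 0) \<Longrightarrow> x = 0"
    and P_subspace: "subspace P"
    and R_cont: "continuous_on {0..1} R"
    and Y_deriv: "\<And>t. t \<in> {0..1} \<Longrightarrow> (Y has_vector_derivative Y' t) (at t within {0..1})"
    and Y'_deriv: "\<And>t. t \<in> {0..1} \<Longrightarrow> (Y' has_vector_derivative blinfun_apply (R t) (Y t)) (at t within {0..1})"
    and Y_timelike: "\<And>t. t \<in> {0..1} \<Longrightarrow> g (Y t) (Y t) < 0"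
  shows "C1_op P (Fop g Y Y')"
proof -
  define Y'' where "Y'' t = blinfun_apply (R t) (Y t)" for t
  have Y''_deriv: "\<And>t. t \<in> {0..1} \<Longrightarrow> (Y' has_vector_derivative Y'' t) (at t within {0..1})"
    using Y'_deriv by (simp add: Y''_def)
  have Y_cont: "continuous_on {0..1} Y" and Y'_cont: "continuous_on {0..1} Y'"
    unfolding continuous_on_eq_continuous_within
    using Y_deriv Y''_deriv has_vector_derivative_continuous by blast+
  have Y''_cont: "continuous_on {0..1} Y''"
    unfolding Y''_def by (intro continuous_intros R_cont Y_cont)
  have rescaled: "continuous_on {0..1} (\<lambda>u. f (t * u))" if "continuous_on {0..1} f" "t \<in> {0..1}"
    for f :: "real \<Rightarrow> 'a" and t
    by (rule continuous_on_compose2[OF that(1)])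
      (use that in \<open>auto intro!: continuous_intros mult_le_one\<close>)
  have "is_op P (Fop g Y Y' t)" "is_op P (Fop_deriv g Y' Y'' t)" if "t \<in> {0..1}" for t
    unfolding Fop_eq_bilin_op[OF g_bilinear] Fop_deriv_def using that
    by (intro is_op_bilin_op g_bilinear continuous_intros rescaled Y_cont Y'_cont Y''_cont; simp)+
  with Fop_difference_quotient_tendsto[OF g_bilinear Y_deriv Y''_deriv Y''_cont]
    Fop_deriv_continuous[OF g_bilinear Y'_cont Y''_cont]
  show ?thesis
    unfolding C1_op_def by blast
qed

end
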